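(* Let $P$ be a finite graded poset with a unique minimum $\hat{0}$ and a unique maximum $\hat{1}$, endowed with its rank function $\operatorname{rk}$, and let $H=\operatorname{rk}(\hat{1})$. Let $X_P(y)=\sum_{p\in P}\mu(\hat{0},p)\,y^{H-\operatorname{rk}(p)}$ be the characteristic polynomial of $P$, where $\mu$ is the Möbius function of $P$. Then no coefficient of the $q$-Zeta polynomial $\mathsf{Z}_{P,\operatorname{rk}}(x)\in\mathbb{Q}(q)[x]$ has a pole at $q=0$, and the polynomial $\mathsf{Z}_{P,\operatorname{rk}}|_{q=0}(x)$ obtained by setting $q=0$ in its coefficients satisfies $$\mathsf{Z}_{P,\operatorname{rk}}|_{q=0}(1-y)=y^{H}X_P(1/y).$$
   Context: $q$ is an indeterminate; for $n\in\mathbb{Z}$, $[n]_q=(q^n-1)/(q-1)$, and $[n]!_q=[1]_q[2]_q\cdots[n]_q$ for $n\ge 0$. For a finite poset $P$, a height function is a map $h:P\to\mathbb{N}$ with $h(x)<h(y)$ whenever $y$ covers $x$. A poset is graded if it has a height function increasing by exactly $1$ along every cover relation; $\operatorname{rk}$ denotes such a height function with minimum value $0$ on each connected component. For $k\ge1$, $\operatorname{Ch}_k(P)$ is the set of strict chains $c_1<\cdots<c_k$ in $P$. For a tuple $a=(a_1,\dots,a_k)$ of distinct nonnegative integers, $\mathsf{E}_a\in\mathbb{Q}(q)[x]$ is the unique polynomial with $\mathsf{E}_a([n]_q)=\sum_{m\in\mathbb{N}^k,\ m_1+\cdots+m_k=n}q^{a_1m_1+\cdots+a_km_k}$ for all $n\ge0$.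 The $q$-Zeta polynomial of $(P,h)$ is $$\mathsf{Z}_{P,h}(x)=\sum_{k\ge1}\sum_{c\in\operatorname{Ch}_k(P)}q^{h(c_1)+\cdots+h(c_k)}\,\mathsf{E}_{(h(c_1),\dots,h(c_k))}\!\left(\frac{x-[k+1]_q}{q^{k+1}}\right)\in\mathbb{Q}(q)[x];$$ it is the unique polynomial such that $\mathsf{Z}_{P,h}([n]_q)=\sum_{e_1\le e_2\le\cdots\le e_{n-1}\text{ in }P}q^{h(e_1)+\cdots+h(e_{n-1})}$ for all integers $n\ge2$. *)

theory Defs
  imports "HOL-Computational_Algebra.Polynomial" "HOL-Computational_Algebra.Fraction_Field"
begin

type_synonym qfield = "rat poly fract"

definition qvar :: qfield where
  "qvar = Fract [:0, 1:] 1"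

definition qint :: "nat \<Rightarrow> qfield" where
  "qint n = (qvar ^ n - 1) / (qvar - 1)"

definition covers :: "'a::order \<Rightarrow> 'a \<Rightarrow> bool" where
  "covers x y \<longleftrightarrow> x < y \<and> \<not> (\<exists>z. x < z \<and> z < y)"

definition multichain_sum :: "('a::{finite,order} \<Rightarrow> nat) \<Rightarrow> nat \<Rightarrow> qfield" where
  "multichain_sum h m =
     (\<Sum>es \<in> {es. length es = m \<and> (\<forall>i. Suc i < length es \<longrightarrow> es ! i \<le> es ! Suc i)}.
        qvar ^ sum_list (map h es))"

definition qZeta :: "('a::{finite,order} \<Rightarrow> nat) \<Rightarrow> qfield poly" where
  "qZeta h = (THE Z. \<forall>n\<ge>2. poly Z (qint n) = multichain_sum h (n - 1))"

definition regular_at_0 :: "qfield \<Rightarrow> bool" where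
  "regular_at_0 r \<longleftrightarrow> (\<exists>a b. poly b 0 \<noteq> 0 \<and> r = Fract a b)"

definition eval_at_0 :: "qfield \<Rightarrow> rat" where
  "eval_at_0 r = (THE c. \<exists>a b. poly b 0 \<noteq> 0 \<and> r = Fract a b \<and> c = poly a 0 / poly b 0)"

definition mobius :: "'a::{finite,order} \<Rightarrow> 'a \<Rightarrow> int" where
  "mobius = (THE m. \<forall>x y. m x y =
      (if x \<le> y then (if x = y then 1 else - (\<Sum>z\<in>{z. x \<le> z \<and> z < y}. m x z)) else 0))"

definition char_poly :: "'a::{finite,order} \<Rightarrow> 'a \<Rightarrow> ('a \<Rightarrow> nat) \<Rightarrow> rat poly" where
  "char_poly b0 b1 rk = (\<Sum>p\<in>UNIV. monom (of_int (mobius b0 p)) (rk b1 - rk p))"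

end

theory Submission
  imports Defs
begin

(* Let M_m(x) be the weighted sum over multichains x <= e_1 <= ... <= e_m.  Splitting off e_1
   gives M_(m+1)(x) = sum_(z >= x) q^h(z) M_m(z), so M_m = T^m 1 for an operator T that is
   triangular with respect to the order, with diagonal entries q^h(x).  As h is strictly
   monotone, these entries differ along every strict inequality, so T has an eigenbasis v_w,
   supported below w, with eigenvalues q^h(w).  Expanding 1 = sum_w a_w v_w yields
   M_(n-1)(0) = sum_w c_w (q^n)^h(w) with c_w = a_w v_w(0) / q^h(w), and since
   q^n = 1 + (q - 1) [n]_q, the q-Zeta polynomial is Z(x) = sum_w c_w (1 + (q - 1) x)^h(w).
   Everything here is regular at q = 0: there v_w becomes the indicator of w, a_w becomes 1,
   and c_w becomes the Moebius value mu(0,w).  Hence Z at q = 0 is sum_w mu(0,w) (1 - x)^h(w),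
   whose value at x = 1 - y is y^H X_P(1/y). *)

section \<open>Evaluation at \<open>q = 0\<close>\<close>

lemma eval_at_0_Fract:
  assumes "poly b 0 \<noteq> 0"
  shows "eval_at_0 (Fract a b) = poly a 0 / poly b 0"
  unfolding eval_at_0_def
proof (rule the_equality)
  show "\<exists>a' b'. poly b' 0 \<noteq> 0 \<and> Fract a b = Fract a' b' \<and> poly a 0 / poly b 0 = poly a' 0 / poly b' 0"
    using assms by blast
next
  fix c
  assume "\<exists>a' b'. poly b' 0 \<noteq> 0 \<and> Fract a b = Fract a' b' \<and> c = poly a' 0 / poly b' 0"
  then obtain a' b' where b': "poly b' 0 \<noteq> 0" and eq: "Fract a b = Fract a' b'"
    and c: "c = poly a' 0 / poly b' 0"
    by blast
  have "b \<noteq> 0" "b' \<noteq> 0"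
    using assms b' by auto
  with eq have "a * b' = a' * b"
    by (simp add: eq_fract)
  then have "poly a 0 * poly b' 0 = poly a' 0 * poly b 0"
    by (metis poly_mult)
  with assms b' have "poly a' 0 / poly b' 0 = poly a 0 / poly b 0"
    by (simp add: frac_eq_eq)
  with c show "c = poly a 0 / poly b 0"
    by simp
qed

lemma regular_at_0_Fract: "poly b 0 \<noteq> 0 \<Longrightarrow> regular_at_0 (Fract a b)"
  unfolding regular_at_0_def by blast

lemma regular_at_0E:
  assumes "regular_at_0 r"
  obtains a b where "b \<noteq> 0" "poly b 0 \<noteq> 0" "r = Fract a b"
  using assms unfolding regular_at_0_def by (metis poly_0)

lemma regular_at_0_add [simp]:
  "regular_at_0 r \<Longrightarrow> regular_at_0 s \<Longrightarrow> regular_at_0 (r + s)"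
  by (elim regular_at_0E) (simp add: regular_at_0_Fract)

lemma eval_at_0_add [simp]:
  "regular_at_0 r \<Longrightarrow> regular_at_0 s \<Longrightarrow> eval_at_0 (r + s) = eval_at_0 r + eval_at_0 s"
  by (elim regular_at_0E) (simp add: eval_at_0_Fract field_simps)

lemma regular_at_0_diff [simp]:
  "regular_at_0 r \<Longrightarrow> regular_at_0 s \<Longrightarrow> regular_at_0 (r - s)"
  by (elim regular_at_0E) (simp add: regular_at_0_Fract)

lemma eval_at_0_diff [simp]:
  "regular_at_0 r \<Longrightarrow> regular_at_0 s \<Longrightarrow> eval_at_0 (r - s) = eval_at_0 r - eval_at_0 s"
  by (elim regular_at_0E) (simp add: eval_at_0_Fract field_simps)

lemma regular_at_0_mult [simp]:
  "regular_at_0 r \<Longrightarrow> regular_at_0 s \<Longrightarrow> regular_at_0 (r * s)"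
  by (elim regular_at_0E) (simp add: regular_at_0_Fract)

lemma eval_at_0_mult [simp]:
  "regular_at_0 r \<Longrightarrow> regular_at_0 s \<Longrightarrow> eval_at_0 (r * s) = eval_at_0 r * eval_at_0 s"
  by (elim regular_at_0E) (simp add: eval_at_0_Fract)

lemma regular_at_0_divide [simp]:
  "regular_at_0 r \<Longrightarrow> regular_at_0 s \<Longrightarrow> eval_at_0 s \<noteq> 0 \<Longrightarrow> regular_at_0 (r / s)"
  by (elim regular_at_0E) (simp add: regular_at_0_Fract eval_at_0_Fract)

lemma regular_at_0_of_nat [simp]: "regular_at_0 (of_nat n)"
  by (simp add: of_nat_fract regular_at_0_Fract)

lemma eval_at_0_of_nat [simp]: "eval_at_0 (of_nat n) = of_nat n"
  by (simp add: of_nat_fract eval_at_0_Fract of_nat_poly)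

lemma regular_at_0_0 [simp]: "regular_at_0 0"
  and regular_at_0_1 [simp]: "regular_at_0 1"
  and eval_at_0_0 [simp]: "eval_at_0 0 = 0"
  and eval_at_0_1 [simp]: "eval_at_0 1 = 1"
  using regular_at_0_of_nat[of 0] regular_at_0_of_nat[of 1] eval_at_0_of_nat[of 0] eval_at_0_of_nat[of 1]
  by simp_all

lemma regular_at_0_qvar [simp]: "regular_at_0 qvar"
  and eval_at_0_qvar [simp]: "eval_at_0 qvar = 0"
  unfolding qvar_def by (simp_all add: regular_at_0_Fract eval_at_0_Fract)

lemma regular_at_0_power [simp]: "regular_at_0 r \<Longrightarrow> regular_at_0 (r ^ n)"
  by (induction n) simp_all

lemma eval_at_0_power [simp]: "regular_at_0 r \<Longrightarrow> eval_at_0 (r ^ n) = eval_at_0 r ^ n"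
  by (induction n) simp_all

lemma regular_at_0_sum [simp]: "\<forall>x\<in>A. regular_at_0 (f x) \<Longrightarrow> regular_at_0 (sum f A)"
  by (induction A rule: infinite_finite_induct) simp_all

lemma eval_at_0_sum [simp]:
  "\<forall>x\<in>A. regular_at_0 (f x) \<Longrightarrow> eval_at_0 (sum f A) = (\<Sum>x\<in>A. eval_at_0 (f x))"
  by (induction A rule: infinite_finite_induct) simp_all

section \<open>Powers of \<open>q\<close> and \<open>q\<close>-integers\<close>

lemma qvar_power: "qvar ^ k = Fract (monom 1 k) 1"
  by (induction k) (simp_all add: qvar_def fract_collapse monom_Suc)

lemma qvar_power_inject [simp]: "qvar ^ k = qvar ^ l \<longleftrightarrow> k = l"
  by (simp add: qvar_power eq_fract monom_eq_iff')

lemma qvar_power_minus_1_nonzero: "k > 0 \<Longrightarrow> qvar ^ k - 1 \<noteq> 0"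
  using qvar_power_inject[of k 0] by simp

lemma qvar_power_eq_qint: "qvar ^ n = 1 + (qvar - 1) * qint n"
  using qvar_power_minus_1_nonzero[of 1] by (simp add: qint_def)

lemma inj_qint: "inj qint"
  by (rule injI) (metis qvar_power_eq_qint qvar_power_inject)

lemma qZeta_eqI:
  assumes "\<And>n. n \<ge> 2 \<Longrightarrow> poly Z (qint n) = multichain_sum h (n - 1)"
  shows "qZeta h = Z"
  unfolding qZeta_def
proof (rule the_equality)
  fix Z'
  assume Z': "\<forall>n\<ge>2. poly Z' (qint n) = multichain_sum h (n - 1)"
  show "Z' = Z"
  proof (rule ccontr)
    assume "Z' \<noteq> Z"
    then have "finite {x. poly (Z' - Z) x = 0}"
      by (intro poly_roots_finite) simp
    moreover have "qint ` {2..} \<subseteq> {x. poly (Z' - Z) x = 0}"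
      using assms Z' by auto
    ultimately have "finite (qint ` {2..})"
      by (rule finite_subset[rotated])
    then show False
      using inj_qint by (simp add: finite_image_iff inj_on_subset infinite_Ici)
  qed
qed (use assms in simp)

section \<open>Finite posets and the Moebius function\<close>

lemma card_greaterThan_less:
  fixes x y :: "'a::{finite,order}"
  shows "x < y \<Longrightarrow> card {y<..} < card {x<..}"
  by (rule psubset_card_mono) auto

lemma card_lessThan_less:
  fixes x y :: "'a::{finite,order}"
  shows "x < y \<Longrightarrow> card {..<x} < card {..<y}"
  by (rule psubset_card_mono) auto

lemma finite_order_greater_induct [case_names greater]:
  fixes x :: "'a::{finite,order}"
  assumes "\<And>x. (\<And>y. x < y \<Longrightarrow> P y) \<Longrightarrow> P x"
  shows "P x"
proof (induction x rule: measure_induct_rule[where f = "\<lambda>x. card {x<..}"])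
  case (less x)
  show ?case
    by (rule assms, rule less.IH, erule card_greaterThan_less)
qed

lemma finite_order_less_induct [case_names less]:
  fixes x :: "'a::{finite,order}"
  assumes "\<And>x. (\<And>y. y < x \<Longrightarrow> P y) \<Longrightarrow> P x"
  shows "P x"
proof (induction x rule: measure_induct_rule[where f = "\<lambda>x. card {..<x}"])
  case (less x)
  show ?case
    by (rule assms, rule less.IH, erule card_lessThan_less)
qed

lemma strict_mono_if_covers:
  fixes h :: "'a::{finite,order} \<Rightarrow> 'b::order"
  assumes covers_less: "\<And>x y. covers x y \<Longrightarrow> h x < h y"
  shows "strict_mono h"
proof (rule strict_monoI)
  fix x y :: 'a
  assume "x < y"
  then show "h x < h y"
  proof (induction x rule: finite_order_greater_induct)
    case (greater x)
    then have "{x<..y} \<noteq> {}"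
      by auto
    then obtain z where z: "z \<in> {x<..y}" and z_min: "\<And>v. v \<in> {x<..y} \<Longrightarrow> v \<le> z \<Longrightarrow> z = v"
      using finite_has_minimal[OF finite] by metis
    have "covers x z"
      unfolding covers_def
    proof (intro conjI notI)
      show "x < z"
        using z by simp
    next
      assume "\<exists>v. x < v \<and> v < z"
      then obtain v where "x < v" "v < z"
        by blast
      moreover from \<open>v < z\<close> z have "v < y"
        by (simp add: less_le_trans)
      ultimately have "z = v"
        using z_min[of v] by (simp add: less_imp_le)
      with \<open>v < z\<close> show False
        by simp
    qed
    then have "h x < h z"
      by (rule covers_less)
    show ?case
    proof (cases "z = y")
      case False
      with z have "z < y"
        by (simp add: order_less_le)
      with z greater.IH have "h z < h y"
        by simp
      with \<open>h x < h z\<close> show ?thesis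
        by (rule less_trans)
    qed (use \<open>h x < h z\<close> in simp)
  qed
qed

function mobius_fun :: "'a::{finite,order} \<Rightarrow> 'a \<Rightarrow> int" where
  "mobius_fun x y =
    (if x \<le> y then (if x = y then 1 else - (\<Sum>z\<in>{z. x \<le> z \<and> z < y}. mobius_fun x z)) else 0)"
  by auto
termination
  by (relation "measure (\<lambda>(x, y). card {..<y})") (auto intro: card_lessThan_less)

lemma mobius_simps:
  "mobius x y = (if x \<le> y then (if x = y then 1 else - (\<Sum>z\<in>{x..<y}. mobius x z)) else 0)"
proof -
  have "mobius = (mobius_fun :: 'a \<Rightarrow> 'a \<Rightarrow> int)"
    unfolding mobius_def
  proof (rule the_equality)
    show "\<forall>x y. mobius_fun x y =
      (if x \<le> y then (if x = y then 1 else - (\<Sum>z\<in>{z. x \<le> z \<and> z < y}. mobius_fun x z)) else 0)"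
      by (metis mobius_fun.simps)
  next
    fix m :: "'a \<Rightarrow> 'a \<Rightarrow> int"
    assume m: "\<forall>x y. m x y =
      (if x \<le> y then (if x = y then 1 else - (\<Sum>z\<in>{z. x \<le> z \<and> z < y}. m x z)) else 0)"
    have "m x y = mobius_fun x y" for x y
    proof (induction y rule: finite_order_less_induct)
      case (less y)
      then show ?case
        by (subst m[rule_format], subst mobius_fun.simps) (auto intro!: sum.cong)
    qed
    then show "m = mobius_fun"
      by blast
  qed
  moreover have "{x..<y} = {z. x \<le> z \<and> z < y}"
    by auto
  ultimately show ?thesis
    by (simp add: mobius_fun.simps[of x y])
qed

lemma sum_mobius_atLeastAtMost:
  assumes "x \<le> y"
  shows "(\<Sum>z\<in>{x..y}. mobius x z) = (if x = y then 1 else 0)"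
proof (cases "x = y")
  case False
  with assms have "{x..y} = insert y {x..<y}" and "mobius x y = - (\<Sum>z\<in>{x..<y}. mobius x z)"
    by (auto simp: mobius_simps[of x y])
  with False show ?thesis
    by simp
qed (simp add: mobius_simps[of x x] mobius_simps[of y y])

lemma sum_atLeastAtMost_swap:
  fixes x y :: "'a::{finite,order}"
  shows "(\<Sum>z\<in>{x..y}. \<Sum>t\<in>{z..y}. f z t) = (\<Sum>t\<in>{x..y}. \<Sum>z\<in>{x..t}. f z t)"
proof -
  have "(\<Sum>z\<in>{x..y}. \<Sum>t\<in>{z..y}. f z t) = (\<Sum>z\<in>{x..y}. \<Sum>t\<in>{t\<in>{x..y}. z \<le> t}. f z t)"
    by (intro sum.cong refl) (auto intro: order_trans)
  also have "\<dots> = (\<Sum>t\<in>{x..y}. \<Sum>z\<in>{z\<in>{x..y}. z \<le> t}. f z t)"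
    by (rule sum.swap_restrict) auto
  also have "\<dots> = (\<Sum>t\<in>{x..y}. \<Sum>z\<in>{x..t}. f z t)"
    by (intro sum.cong refl) (auto intro: order_trans)
  finally show ?thesis .
qed

lemma mobius_eqI_upper:
  fixes \<nu> :: "'a::{finite,order} \<Rightarrow> 'b::comm_ring_1"
  assumes \<nu>: "\<And>x. x \<le> y \<Longrightarrow> (\<Sum>z\<in>{x..y}. \<nu> z) = (if x = y then 1 else 0)"
    and "x \<le> y"
  shows "\<nu> x = of_int (mobius x y)"
proof -
  have "of_int (mobius x y) = (\<Sum>z\<in>{x..y}. if z = y then of_int (mobius x z) else 0 :: 'b)"
    using \<open>x \<le> y\<close> by (simp add: sum.delta')
  also have "\<dots> = (\<Sum>z\<in>{x..y}. \<Sum>t\<in>{z..y}. of_int (mobius x z) * \<nu> t)"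
    by (intro sum.cong refl) (simp add: \<nu> flip: sum_distrib_left)
  also have "\<dots> = (\<Sum>t\<in>{x..y}. of_int (\<Sum>z\<in>{x..t}. mobius x z) * \<nu> t)"
    by (simp add: sum_atLeastAtMost_swap sum_distrib_right)
  also have "\<dots> = (\<Sum>t\<in>{x..y}. if x = t then \<nu> t else 0)"
    by (intro sum.cong refl) (simp add: sum_mobius_atLeastAtMost)
  also have "\<dots> = \<nu> x"
    using \<open>x \<le> y\<close> by (simp add: sum.delta)
  finally show ?thesis ..
qed

section \<open>The transfer operator and its eigenbasis\<close>

text \<open>\<open>eigvec h w\<close> and \<open>one_coord h w\<close> are the \<open>v_w\<close> and \<open>a_w\<close> sketched at the top.
  \<open>qmobius h x w\<close> is \<open>v_w(x)\<close> without the factor \<open>q ^ (h w - h x)\<close>; at \<open>q = 0\<close> its recursion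
  becomes the dual Moebius recursion \<open>mu(x,w) = - (\<Sum>z\<in>{x<..w}. mu(z,w))\<close>.\<close>

function qmobius :: "('a::{finite,order} \<Rightarrow> nat) \<Rightarrow> 'a \<Rightarrow> 'a \<Rightarrow> qfield" where
  "qmobius h x w =
    (if x < w then (\<Sum>z\<in>{x<..w}. qmobius h z w) / (qvar ^ (h w - h x) - 1)
     else if x = w then 1 else 0)"
  by auto
termination
  by (relation "measure (\<lambda>(h, x, w). card {x<..})") (auto intro: card_greaterThan_less)

declare qmobius.simps [simp del]

definition eigvec :: "('a::{finite,order} \<Rightarrow> nat) \<Rightarrow> 'a \<Rightarrow> 'a \<Rightarrow> qfield" where
  "eigvec h w x = qvar ^ (h w - h x) * qmobius h x w"

definition transfer_op :: "('a::{finite,order} \<Rightarrow> nat) \<Rightarrow> ('a \<Rightarrow> qfield) \<Rightarrow> 'a \<Rightarrow> qfield" where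
  "transfer_op h f x = (\<Sum>z\<in>{x..}. qvar ^ h z * f z)"

function one_coord :: "('a::{finite,order} \<Rightarrow> nat) \<Rightarrow> 'a \<Rightarrow> qfield" where
  "one_coord h x = 1 - (\<Sum>w\<in>{x<..}. one_coord h w * eigvec h w x)"
  by auto
termination
  by (relation "measure (\<lambda>(h, x). card {x<..})") (auto intro: card_greaterThan_less)

declare one_coord.simps [simp del]

lemma qmobius_self [simp]: "qmobius h w w = 1"
  by (simp add: qmobius.simps)

lemma qmobius_eq_0: "\<not> x \<le> w \<Longrightarrow> qmobius h x w = 0"
  by (simp add: qmobius.simps less_le_not_le)

lemma eigvec_self [simp]: "eigvec h w w = 1"
  by (simp add: eigvec_def)

lemma eigvec_eq_0: "\<not> x \<le> w \<Longrightarrow> eigvec h w x = 0"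
  by (simp add: eigvec_def qmobius_eq_0)

lemma sum_one_coord_eigvec: "(\<Sum>w\<in>UNIV. one_coord h w * eigvec h w x) = 1"
proof -
  have "(\<Sum>w\<in>UNIV. one_coord h w * eigvec h w x) = (\<Sum>w\<in>{x..}. one_coord h w * eigvec h w x)"
    by (rule sum.mono_neutral_right) (auto simp: eigvec_eq_0)
  also have "{x..} = insert x {x<..}"
    by auto
  finally show ?thesis
    by (simp add: one_coord.simps[of h x])
qed

locale height_function =
  fixes h :: "'a::{finite,order} \<Rightarrow> nat"
  assumes strict_mono: "strict_mono h"
begin

lemma height_less: "x < y \<Longrightarrow> h x < h y"
  using strict_mono by (rule strict_monoD)

lemma height_le: "x \<le> y \<Longrightarrow> h x \<le> h y"
  using strict_mono_mono[OF strict_mono] by (rule monoD)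

lemma sum_qmobius_atLeastAtMost:
  assumes "x \<le> w"
  shows "(\<Sum>z\<in>{x..w}. qmobius h z w) = qvar ^ (h w - h x) * qmobius h x w"
proof (cases "x = w")
  case False
  with assms have "x < w"
    by simp
  then have "qvar ^ (h w - h x) - 1 \<noteq> 0"
    by (intro qvar_power_minus_1_nonzero) (simp add: height_less)
  moreover have "qmobius h x w = (\<Sum>z\<in>{x<..w}. qmobius h z w) / (qvar ^ (h w - h x) - 1)"
    using \<open>x < w\<close> by (simp add: qmobius.simps[of h x w])
  moreover have "{x..w} = insert x {x<..w}"
    using assms by auto
  ultimately show ?thesis
    by (simp add: field_simps)
qed simp

lemma transfer_op_eigvec: "transfer_op h (eigvec h w) x = qvar ^ h w * eigvec h w x"
proof (cases "x \<le> w")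
  case True
  have "transfer_op h (eigvec h w) x = (\<Sum>z\<in>{x..w}. qvar ^ h z * eigvec h w z)"
    unfolding transfer_op_def by (rule sum.mono_neutral_right) (auto simp: eigvec_eq_0)
  also have "\<dots> = (\<Sum>z\<in>{x..w}. qvar ^ h w * qmobius h z w)"
    by (intro sum.cong refl) (simp add: eigvec_def height_le mult.assoc flip: power_add)
  also have "\<dots> = qvar ^ h w * eigvec h w x"
    using True by (simp add: sum_qmobius_atLeastAtMost eigvec_def flip: sum_distrib_left)
  finally show ?thesis .
next
  case False
  then have "transfer_op h (eigvec h w) x = 0"
    unfolding transfer_op_def by (intro sum.neutral) (auto simp: eigvec_eq_0 dest: order_trans)
  with False show ?thesis
    by (simp add: eigvec_eq_0)
qed

lemma regular_qmobius [simp]: "regular_at_0 (qmobius h x w)"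
proof (induction x rule: finite_order_greater_induct)
  case (greater x)
  show ?case
  proof (cases "x < w")
    case True
    then have "eval_at_0 (qvar ^ (h w - h x) - 1) \<noteq> 0"
      using height_less[of x w] by (simp add: power_0_left)
    with True greater.IH show ?thesis
      by (subst qmobius.simps) simp
  qed (simp add: qmobius.simps)
qed

lemma eval_qmobius:
  assumes "x \<le> w"
  shows "eval_at_0 (qmobius h x w) = of_int (mobius x w)"
proof (rule mobius_eqI_upper[where \<nu> = "\<lambda>z. eval_at_0 (qmobius h z w)", OF _ assms])
  fix y
  assume "y \<le> w"
  then have "(\<Sum>z\<in>{y..w}. eval_at_0 (qmobius h z w)) = 0 ^ (h w - h y) * eval_at_0 (qmobius h y w)"
    by (simp flip: eval_at_0_sum add: sum_qmobius_atLeastAtMost)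
  also have "\<dots> = (if y = w then 1 else 0)"
    using \<open>y \<le> w\<close> height_less[of y w] by (auto simp: order_less_le)
  finally show "(\<Sum>z\<in>{y..w}. eval_at_0 (qmobius h z w)) = (if y = w then 1 else 0)" .
qed

lemma regular_eigvec [simp]: "regular_at_0 (eigvec h w x)"
  by (simp add: eigvec_def)

lemma eval_eigvec: "eval_at_0 (eigvec h w x) = (if x = w then 1 else 0)"
proof (cases "x < w")
  case True
  then show ?thesis
    using height_less[of x w] by (simp add: eigvec_def)
qed (auto simp: eigvec_def qmobius_eq_0 order_less_le)

lemma regular_one_coord [simp]: "regular_at_0 (one_coord h x)"
proof (induction x rule: finite_order_greater_induct)
  case (greater x)
  then show ?case
    by (subst one_coord.simps) simp
qed

lemma eval_one_coord [simp]: "eval_at_0 (one_coord h x) = 1"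
  by (subst one_coord.simps) (auto simp: eval_eigvec intro!: sum.neutral)

end

section \<open>Multichain sums and the \<open>q\<close>-Zeta polynomial\<close>

definition upper_multichains :: "'a::order \<Rightarrow> nat \<Rightarrow> 'a list set" where
  "upper_multichains x m = {es. length es = m \<and> sorted_wrt (\<le>) es \<and> (\<forall>e\<in>set es. x \<le> e)}"

lemma finite_upper_multichains: "finite (upper_multichains (x :: 'a::{finite,order}) m)"
proof -
  have "finite {es :: 'a list. set es \<subseteq> UNIV \<and> length es = m}"
    by (rule finite_lists_length_eq) simp
  then show ?thesis
    by (rule finite_subset[rotated]) (auto simp: upper_multichains_def)
qed

lemma upper_multichains_0: "upper_multichains x 0 = {[]}"
  by (auto simp: upper_multichains_def)

lemma upper_multichains_Suc:
  "upper_multichains x (Suc m) = (\<lambda>(z, es). z # es) ` (SIGMA z:{x..}. upper_multichains z m)"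
  by (auto simp: upper_multichains_def length_Suc_conv image_iff intro: order_trans)

definition upper_multichain_sum :: "('a::{finite,order} \<Rightarrow> nat) \<Rightarrow> nat \<Rightarrow> 'a \<Rightarrow> qfield" where
  "upper_multichain_sum h m x = (\<Sum>es\<in>upper_multichains x m. qvar ^ sum_list (map h es))"

lemma upper_multichain_sum_0 [simp]: "upper_multichain_sum h 0 x = 1"
  by (simp add: upper_multichain_sum_def upper_multichains_0)

lemma upper_multichain_sum_Suc:
  "upper_multichain_sum h (Suc m) = transfer_op h (upper_multichain_sum h m)"
proof
  fix x :: 'a
  have "inj_on (\<lambda>(z, es). z # es) (SIGMA z:{x..}. upper_multichains z m)"
    by (auto simp: inj_on_def)
  then have "upper_multichain_sum h (Suc m) x =
      (\<Sum>(z, es)\<in>(SIGMA z:{x..}. upper_multichains z m). qvar ^ sum_list (map h (z # es)))"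
    by (simp add: upper_multichain_sum_def upper_multichains_Suc sum.reindex split_def)
  also have "\<dots> = transfer_op h (upper_multichain_sum h m) x"
    by (simp add: sum.Sigma[symmetric] finite_upper_multichains transfer_op_def
        upper_multichain_sum_def sum_distrib_left power_add)
  finally show "upper_multichain_sum h (Suc m) x = transfer_op h (upper_multichain_sum h m) x" .
qed

lemma multichain_sum_eq_upper_multichain_sum:
  assumes "\<And>p. b0 \<le> p"
  shows "multichain_sum h m = upper_multichain_sum h m b0"
proof -
  have "sorted_wrt (\<le>) es \<longleftrightarrow> (\<forall>i. Suc i < length es \<longrightarrow> es ! i \<le> es ! Suc i)" for es :: "'a list"
    by (rule sorted_wrt_iff_nth_Suc_transp) (auto intro: transpI order_trans)
  then show ?thesis
    using assms by (simp add: multichain_sum_def upper_multichain_sum_def upper_multichains_def)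
qed

context height_function
begin

lemma upper_multichain_sum_eq:
  "upper_multichain_sum h m x = (\<Sum>w\<in>UNIV. one_coord h w * qvar ^ (h w * m) * eigvec h w x)"
proof (induction m arbitrary: x)
  case 0
  then show ?case
    by (simp add: sum_one_coord_eigvec)
next
  case (Suc m)
  have "upper_multichain_sum h (Suc m) x =
      (\<Sum>z\<in>{x..}. \<Sum>w\<in>UNIV. qvar ^ h z * (one_coord h w * qvar ^ (h w * m) * eigvec h w z))"
    by (simp add: upper_multichain_sum_Suc transfer_op_def Suc.IH sum_distrib_left)
  also have "\<dots> = (\<Sum>w\<in>UNIV. one_coord h w * qvar ^ (h w * m) * transfer_op h (eigvec h w) x)"
    by (subst sum.swap) (simp add: transfer_op_def sum_distrib_left mult_ac)
  also have "\<dots> = (\<Sum>w\<in>UNIV. one_coord h w * qvar ^ (h w * Suc m) * eigvec h w x)"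
    by (simp add: transfer_op_eigvec power_add mult_ac)
  finally show ?case .
qed

lemma qZeta_eq:
  assumes "\<And>p. b0 \<le> p" and "h b0 = 0"
  shows "qZeta h = (\<Sum>w\<in>UNIV. smult (one_coord h w * qmobius h b0 w) ([:1, qvar - 1:] ^ h w))"
proof (rule qZeta_eqI)
  fix n :: nat
  assume "n \<ge> 2"
  then obtain m where n: "n = Suc m"
    by (cases n) auto
  have "multichain_sum h (n - 1) = (\<Sum>w\<in>UNIV. one_coord h w * qvar ^ (h w * m) * eigvec h w b0)"
    by (simp add: n multichain_sum_eq_upper_multichain_sum[OF assms(1)] upper_multichain_sum_eq)
  also have "\<dots> = (\<Sum>w\<in>UNIV. one_coord h w * qmobius h b0 w * (qvar ^ n) ^ h w)"
  proof (intro sum.cong refl)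
    fix w
    have "(qvar ^ n) ^ h w = qvar ^ (h w * m + h w)"
      by (simp only: power_mult[symmetric]) (simp add: n algebra_simps)
    then show "one_coord h w * qvar ^ (h w * m) * eigvec h w b0 =
        one_coord h w * qmobius h b0 w * (qvar ^ n) ^ h w"
      by (simp add: eigvec_def assms(2) power_add mult_ac)
  qed
  also have "\<dots> = poly (\<Sum>w\<in>UNIV. smult (one_coord h w * qmobius h b0 w) ([:1, qvar - 1:] ^ h w)) (qint n)"
    by (simp add: poly_sum qvar_power_eq_qint mult.commute)
  finally show "poly (\<Sum>w\<in>UNIV. smult (one_coord h w * qmobius h b0 w) ([:1, qvar - 1:] ^ h w)) (qint n) =
      multichain_sum h (n - 1)" ..
qed

end

section \<open>Specialisation at \<open>q = 0\<close>\<close>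

lemma coeff_pCons_1_power:
  fixes b :: "'a::comm_semiring_1"
  shows "coeff ([:1, b:] ^ n) j = of_nat (n choose j) * b ^ j"
proof (cases "j \<le> n")
  case False
  have "degree ([:1, b:] ^ n) \<le> n"
    by (rule order_trans[OF degree_power_le]) (simp add: degree_pCons_le)
  with False show ?thesis
    by (simp add: coeff_eq_0 binomial_eq_0)
qed (simp add: coeff_linear_poly_power)

lemma coeff_sum_smult_pCons_1_power:
  "coeff (\<Sum>w\<in>A. smult (c w) ([:1, b:] ^ k w)) j = (\<Sum>w\<in>A. c w * of_nat (k w choose j) * b ^ j)"
  by (simp add: coeff_sum coeff_pCons_1_power mult.assoc)

lemma regular_coeff_sum_smult_pCons_1_power:
  assumes "\<forall>w\<in>A. regular_at_0 (c w)"
  shows "regular_at_0 (coeff (\<Sum>w\<in>A. smult (c w) ([:1, qvar - 1:] ^ k w)) j)"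
  using assms by (simp add: coeff_sum_smult_pCons_1_power)

lemma map_poly_eval_at_0_sum_smult_pCons_1_power:
  assumes "\<forall>w\<in>A. regular_at_0 (c w)"
  shows "map_poly eval_at_0 (\<Sum>w\<in>A. smult (c w) ([:1, qvar - 1:] ^ k w)) =
    (\<Sum>w\<in>A. smult (eval_at_0 (c w)) ([:1, -1:] ^ k w))"
  by (rule poly_eqI) (simp add: assms coeff_map_poly coeff_sum_smult_pCons_1_power)

lemma char_poly_reciprocal:
  fixes y :: rat
  assumes "y \<noteq> 0" and "\<And>p. h p \<le> h b1"
  shows "y ^ h b1 * poly (char_poly b0 b1 h) (1 / y) = (\<Sum>p\<in>UNIV. of_int (mobius b0 p) * y ^ h p)"
  unfolding char_poly_def poly_sum poly_monom sum_distrib_left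
proof (intro sum.cong refl)
  fix p
  have "y ^ h b1 = y ^ h p * y ^ (h b1 - h p)"
    using assms(2)[of p] by (simp flip: power_add)
  with assms(1) show "y ^ h b1 * (of_int (mobius b0 p) * (1 / y) ^ (h b1 - h p)) =
      of_int (mobius b0 p) * y ^ h p"
    by (simp add: power_one_over field_simps)
qed

theorem mainTheorem1:
  fixes b0 b1 :: "'a::{finite,order}" and rk :: "'a \<Rightarrow> nat"
  assumes "\<forall>p. b0 \<le> p" and "\<forall>p. p \<le> b1"
    and "rk b0 = 0" and "\<forall>x y. covers x y \<longrightarrow> rk y = rk x + 1"
  shows "(\<forall>i. regular_at_0 (coeff (qZeta rk) i)) \<and>
         (\<forall>y::rat. y \<noteq> 0 \<longrightarrow>
            poly (map_poly eval_at_0 (qZeta rk)) (1 - y) = y ^ rk b1 * poly (char_poly b0 b1 rk) (1 / y))"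
proof -
  interpret height_function rk
    by unfold_locales (rule strict_mono_if_covers, simp add: assms(4))
  define c where "c w = one_coord rk w * qmobius rk b0 w" for w
  have qZeta: "qZeta rk = (\<Sum>w\<in>UNIV. smult (c w) ([:1, qvar - 1:] ^ rk w))"
    unfolding c_def using assms(1,3) by (simp add: qZeta_eq)
  have c: "\<forall>w\<in>UNIV. regular_at_0 (c w)" "eval_at_0 (c w) = of_int (mobius b0 w)" for w
    using assms(1) by (simp_all add: c_def eval_qmobius)
  have "poly (map_poly eval_at_0 (qZeta rk)) (1 - y) = (\<Sum>w\<in>UNIV. of_int (mobius b0 w) * y ^ rk w)"
    for y :: rat
    by (simp add: qZeta map_poly_eval_at_0_sum_smult_pCons_1_power c poly_sum)
  moreover have "rk p \<le> rk b1" for p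
    using assms(2) by (simp add: height_le)
  ultimately show ?thesis
    using c(1) by (simp add: qZeta regular_coeff_sum_smult_pCons_1_power char_poly_reciprocal)
qed

end
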